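(* Let $n\ge 3$ and let $Q$ be the set of all faces of $\Delta_{n+1}$ of the form $A(F)$, $B(F)$, $C(F,S)$, $D(F,S)$ with $F$ a face of $\Delta_n$ and $S\in F$ (equivalently, the faces of $\Delta_{n+1}$ containing no vertex of the form $\{i,n+1\}$, $2\le i\le n$). Then $Q$ is a subcomplex of $\Delta_{n+1}$ and it is contractible.
   Context: The Whitehouse complex $\Delta_n$ ($n\ge 3$) is the simplicial complex with vertex set $V_n=\{S\subseteq\{2,\dots,n\}: 2\le |S|\le n-2\}$, in which a subset $F\subseteq V_n$ is a face iff for all $S,T\in F$ one has $S\subseteq T$, $T\subseteq S$, or $S\cap T=\emptyset$. (So $\Delta_3=\{\emptyset\}$.) For a face $F$ of $\Delta_n$: $A(F)=F$; $B(F)=F\cup\{\{2,\dots,n\}\}$; for $S\in F$, $C(F,S)=\{T\cup\{n+1\}: T\in F, S\subseteq T\}\cup\{T: T\in F, S\not\subseteq T\}$ and $D(F,S)=C(F,S)\cup\{S\}$. *)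

theory Defs
  imports "HOL-Analysis.Analysis"
begin

definition wh_vertices :: "nat \<Rightarrow> nat set set" where
  "wh_vertices n = {S. S \<subseteq> {2..n} \<and> 2 \<le> card S \<and> card S + 2 \<le> n}"

definition whitehouse :: "nat \<Rightarrow> nat set set set" where
  "whitehouse n = {F. F \<subseteq> wh_vertices n \<and>
      (\<forall>S\<in>F. \<forall>T\<in>F. S \<subseteq> T \<or> T \<subseteq> S \<or> S \<inter> T = {})}"

definition faceA :: "nat set set \<Rightarrow> nat set set" where
  "faceA F = F"

definition faceB :: "nat \<Rightarrow> nat set set \<Rightarrow> nat set set" where
  "faceB n F = insert {2..n} F"

definition faceC :: "nat \<Rightarrow> nat set set \<Rightarrow> nat set \<Rightarrow> nat set set" where
  "faceC n F S = {insert (n+1) T | T. T \<in> F \<and> S \<subseteq> T} \<union> {T. T \<in> F \<and> \<not> S \<subseteq> T}"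

definition faceD :: "nat \<Rightarrow> nat set set \<Rightarrow> nat set \<Rightarrow> nat set set" where
  "faceD n F S = insert S (faceC n F S)"

definition Qcomplex :: "nat \<Rightarrow> nat set set set" where
  "Qcomplex n =
     {faceA F | F. F \<in> whitehouse n}
   \<union> {faceB n F | F. F \<in> whitehouse n}
   \<union> {faceC n F S | F S. F \<in> whitehouse n \<and> S \<in> F}
   \<union> {faceD n F S | F S. F \<in> whitehouse n \<and> S \<in> F}"

definition simplicial_complex :: "'v set set \<Rightarrow> bool" where
  "simplicial_complex K \<longleftrightarrow> (\<forall>F\<in>K. finite F \<and> (\<forall>G. G \<subseteq> F \<longrightarrow> G \<in> K))"

definition subcomplex :: "'v set set \<Rightarrow> 'v set set \<Rightarrow> bool" where
  "subcomplex L K \<longleftrightarrow> simplicial_complex L \<and> L \<subseteq> K"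

text \<open>Geometric realization: barycentric-coordinate functions v \<mapsto> t_v, nonnegative, summing to 1,
  supported on a face.\<close>
definition geom_realization :: "'v set set \<Rightarrow> ('v \<Rightarrow> real) set" where
  "geom_realization K = {f. (\<forall>v. 0 \<le> f v) \<and>
      (\<exists>F\<in>K. finite F \<and> {v. f v \<noteq> 0} \<subseteq> F \<and> sum f F = 1)}"

end

theory Submission
  imports Defs
begin

text \<open>Q consists of the faces of Delta_{n+1} all of whose vertices through the new point n+1 have
  more than two elements.  Write K_k for the faces all of whose vertices through n+1 have more
  than k elements, so that Q = K_2.  For k \<ge> 2, deleting n+1 from the vertices of size k+1
  through it is a vertex map from K_k to K_{k+1} which is contiguous to the identity (every face
  together with its image is still a face of K_k), so the straight-line homotopy deforms |K_k|
  into |K_{k+1}|.  No vertex of K_{n-1} contains n+1 at all, so K_{n-1} is a cone with apex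
  {2,...,n}.\<close>

text \<open>The affine extension of a vertex map to barycentric coordinates.  Summing over a fixed
  finite vertex set V, rather than over the support, makes it continuous in the product
  topology.\<close>
definition vertex_push :: "'v set \<Rightarrow> ('v \<Rightarrow> 'w) \<Rightarrow> ('v \<Rightarrow> real) \<Rightarrow> 'w \<Rightarrow> real" where
  "vertex_push V \<phi> f = (\<lambda>w. \<Sum>v\<in>{v\<in>V. \<phi> v = w}. f v)"

lemma vertex_push_eq:
  assumes "finite V" "F \<subseteq> V" "{v. f v \<noteq> 0} \<subseteq> F"
  shows "vertex_push V \<phi> f w = (\<Sum>v\<in>{v\<in>F. \<phi> v = w}. f v)"
  unfolding vertex_push_def by (rule sum.mono_neutral_right) (use assms in auto)

lemma vertex_push_support:
  assumes "finite V" "F \<subseteq> V" "{v. f v \<noteq> 0} \<subseteq> F"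
  shows "{w. vertex_push V \<phi> f w \<noteq> 0} \<subseteq> \<phi> ` F"
proof
  fix w assume "w \<in> {w. vertex_push V \<phi> f w \<noteq> 0}"
  then have "(\<Sum>v\<in>{v\<in>F. \<phi> v = w}. f v) \<noteq> 0"
    by (simp add: vertex_push_eq[OF assms])
  then obtain v where "v \<in> {v\<in>F. \<phi> v = w}"
    by (rule sum.not_neutral_contains_not_neutral)
  then show "w \<in> \<phi> ` F" by blast
qed

lemma sum_vertex_push:
  assumes "finite V" "F \<subseteq> V" "{v. f v \<noteq> 0} \<subseteq> F"
  shows "sum (vertex_push V \<phi> f) (\<phi> ` F) = sum f F"
  using sum.image_gen[OF finite_subset[OF assms(2,1)], of f \<phi>]
  by (simp add: vertex_push_eq[OF assms])

lemma vertex_push_nonneg: "(\<And>v. 0 \<le> f v) \<Longrightarrow> 0 \<le> vertex_push V \<phi> f w"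
  unfolding vertex_push_def by (simp add: sum_nonneg)

lemma continuous_on_vertex_push: "continuous_on S (vertex_push V \<phi>)"
  unfolding vertex_push_def
  by (intro continuous_on_coordinatewise_then_product continuous_on_sum
      continuous_on_subset[OF continuous_on_product_coordinates] subset_UNIV)

lemma geom_realizationI:
  assumes "\<And>v. 0 \<le> f v" "F \<in> K" "finite F" "{v. f v \<noteq> 0} \<subseteq> F" "sum f F = 1"
  shows "f \<in> geom_realization K"
  unfolding geom_realization_def using assms by blast

lemma geom_realizationE:
  assumes "f \<in> geom_realization K"
  obtains F where "F \<in> K" "finite F" "{v. f v \<noteq> 0} \<subseteq> F" "sum f F = 1"
  using assms unfolding geom_realization_def by blast

lemma geom_realization_nonneg: "f \<in> geom_realization K \<Longrightarrow> 0 \<le> f v"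
  unfolding geom_realization_def by blast

lemma geom_realization_mono: "K \<subseteq> L \<Longrightarrow> geom_realization K \<subseteq> geom_realization L"
  unfolding geom_realization_def by blast

lemma indicator_in_geom_realization: "{v} \<in> K \<Longrightarrow> indicator {v} \<in> geom_realization K"
  by (rule geom_realizationI[of _ "{v}"]) (auto simp: indicator_def)

lemma convex_combination_in_geom_realization:
  assumes "F \<in> K" "finite F"
    and f: "\<And>v. 0 \<le> f v" "{v. f v \<noteq> 0} \<subseteq> F" "sum f F = 1"
    and g: "\<And>v. 0 \<le> g v" "{v. g v \<noteq> 0} \<subseteq> F" "sum g F = 1"
    and t: "0 \<le> t" "t \<le> 1"
  shows "(\<lambda>v. (1 - t) * f v + t * g v) \<in> geom_realization K"
proof (rule geom_realizationI[OF _ assms(1,2)])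
  show "0 \<le> (1 - t) * f v + t * g v" for v
    using f(1)[of v] g(1)[of v] t by simp
  have "{v. (1 - t) * f v + t * g v \<noteq> 0} \<subseteq> {v. f v \<noteq> 0} \<union> {v. g v \<noteq> 0}"
    by auto
  then show "{v. (1 - t) * f v + t * g v \<noteq> 0} \<subseteq> F"
    using f(2) g(2) by blast
  show "(\<Sum>v\<in>F. (1 - t) * f v + t * g v) = 1"
    by (simp add: sum.distrib flip: sum_distrib_left add: f(3) g(3))
qed

lemma vertex_push_in_geom_realization:
  assumes V: "finite V" "\<And>F. F \<in> K \<Longrightarrow> F \<subseteq> V"
    and KL: "\<And>F. F \<in> K \<Longrightarrow> \<phi> ` F \<in> L"
    and f: "f \<in> geom_realization K"
  shows "vertex_push V \<phi> f \<in> geom_realization L"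
proof -
  obtain F where F: "F \<in> K" "finite F" "{v. f v \<noteq> 0} \<subseteq> F" "sum f F = 1"
    using f by (rule geom_realizationE)
  show ?thesis
  proof (rule geom_realizationI[OF _ KL[OF F(1)]])
    show "0 \<le> vertex_push V \<phi> f v" for v
      by (rule vertex_push_nonneg[OF geom_realization_nonneg[OF f]])
    show "{v. vertex_push V \<phi> f v \<noteq> 0} \<subseteq> \<phi> ` F"
      by (rule vertex_push_support[OF V(1) V(2)[OF F(1)] F(3)])
    show "sum (vertex_push V \<phi> f) (\<phi> ` F) = 1"
      using sum_vertex_push[OF V(1) V(2)[OF F(1)] F(3)] F(4) by simp
  qed (use F(2) in blast)
qed

text \<open>The straight-line homotopy stays inside the realization because each face spans a face
  together with its image.\<close>
lemma homotopic_id_vertex_push: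
  fixes K :: "'v set set"
  assumes V: "finite V" "\<And>F. F \<in> K \<Longrightarrow> F \<subseteq> V"
    and contiguous: "\<And>F. F \<in> K \<Longrightarrow> F \<union> \<phi> ` F \<in> K"
  shows "homotopic_with_canon (\<lambda>x. True) (geom_realization K) (geom_realization K)
           id (vertex_push V \<phi>)"
proof -
  define h where "h = (\<lambda>(t::real, f) v. (1 - t) * f v + t * vertex_push V \<phi> f v)"
  have "continuous_on ({0..1} \<times> geom_realization K) h"
    unfolding h_def case_prod_unfold
    by (intro continuous_on_coordinatewise_then_product continuous_intros
        continuous_on_product_then_coordinatewise[OF continuous_on_compose2[OF
          continuous_on_vertex_push[of UNIV] continuous_on_snd[OF continuous_on_id] subset_UNIV]]
        continuous_on_product_then_coordinatewise[OF continuous_on_snd[OF continuous_on_id]])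
  moreover have "h (t, f) \<in> geom_realization K"
    if t: "t \<in> {0..1}" and f: "f \<in> geom_realization K" for t f
  proof -
    obtain F where F: "F \<in> K" "finite F" "{v. f v \<noteq> 0} \<subseteq> F" "sum f F = 1"
      using f by (rule geom_realizationE)
    let ?G = "F \<union> \<phi> ` F"
    have G: "finite ?G"
      using F(2) by blast
    have push_support: "{v. vertex_push V \<phi> f v \<noteq> 0} \<subseteq> \<phi> ` F"
      by (rule vertex_push_support[OF V(1) V(2)[OF F(1)] F(3)])
    have "sum f ?G = sum f F"
      by (rule sum.mono_neutral_right[OF G]) (use F(3) in auto)
    moreover have "sum (vertex_push V \<phi> f) ?G = sum (vertex_push V \<phi> f) (\<phi> ` F)"
      by (rule sum.mono_neutral_right[OF G]) (use push_support in auto)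
    ultimately have sums: "sum f ?G = 1" "sum (vertex_push V \<phi> f) ?G = 1"
      using sum_vertex_push[OF V(1) V(2)[OF F(1)] F(3)] F(4) by simp_all
    have "(\<lambda>v. (1 - t) * f v + t * vertex_push V \<phi> f v) \<in> geom_realization K"
      by (rule convex_combination_in_geom_realization[OF contiguous[OF F(1)] G])
        (use F(3) push_support sums t geom_realization_nonneg[OF f]
             vertex_push_nonneg[OF geom_realization_nonneg[OF f]] in auto)
    then show ?thesis
      by (simp add: h_def)
  qed
  ultimately show ?thesis
    by (simp add: homotopic_with) (rule exI[of _ h], auto simp: h_def)
qed

lemma contractible_if_deforms_into_contractible:
  assumes "homotopic_with_canon (\<lambda>x. True) S S id r" "continuous_on S r" "r ` S \<subseteq> T" "T \<subseteq> S"
    and "contractible T"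
  shows "contractible S"
proof -
  obtain a where a: "homotopic_with_canon (\<lambda>x. True) T T id (\<lambda>x. a)"
    using \<open>contractible T\<close> unfolding contractible_def by blast
  have "homotopic_with_canon (\<lambda>x. True) S T (id \<circ> r) ((\<lambda>x. a) \<circ> r)"
    by (rule homotopic_with_compose_continuous_map_right[OF a]) (use assms in auto)
  then have "homotopic_with_canon (\<lambda>x. True) S S r (\<lambda>x. a)"
    using homotopic_with_subset_right \<open>T \<subseteq> S\<close> by (simp add: o_def) blast
  then show ?thesis
    unfolding contractible_def using assms(1) homotopic_with_trans by blast
qed

lemma contractible_geom_realization_cone:
  assumes V: "finite V" "\<And>F. F \<in> K \<Longrightarrow> F \<subseteq> V" and cone: "\<And>F. F \<in> K \<Longrightarrow> insert a F \<in> K"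
  shows "contractible (geom_realization K)"
proof -
  have "homotopic_with_canon (\<lambda>x. True) (geom_realization K) (geom_realization K)
          id (vertex_push V (\<lambda>_. a))"
    by (rule homotopic_id_vertex_push[OF V]) (use cone in \<open>auto simp: image_constant_conv\<close>)
  moreover have "vertex_push V (\<lambda>_. a) f = indicator {a}" if "f \<in> geom_realization K" for f
  proof -
    obtain F where F: "F \<in> K" "{v. f v \<noteq> 0} \<subseteq> F" "sum f F = 1"
      using \<open>f \<in> geom_realization K\<close> by (rule geom_realizationE)
    have "vertex_push V (\<lambda>_. a) f w = (if w = a then sum f F else 0)" for w
      by (simp add: vertex_push_eq[OF V(1) V(2)[OF F(1)] F(2)])
    then show ?thesis
      using F(3) by (simp add: fun_eq_iff indicator_def)
  qed
  ultimately have "homotopic_with_canon (\<lambda>x. True) (geom_realization K) (geom_realization K)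
                     id (\<lambda>_. indicator {a})"
    by (auto elim!: homotopic_with_eq)
  then show ?thesis
    unfolding contractible_def by blast
qed

definition nested_or_disjoint :: "'a set \<Rightarrow> 'a set \<Rightarrow> bool" where
  "nested_or_disjoint S T \<longleftrightarrow> S \<subseteq> T \<or> T \<subseteq> S \<or> S \<inter> T = {}"

lemma nested_or_disjoint_sym: "nested_or_disjoint S T \<Longrightarrow> nested_or_disjoint T S"
  unfolding nested_or_disjoint_def by blast

lemma nested_or_disjoint_refl: "nested_or_disjoint S S"
  unfolding nested_or_disjoint_def by blast

lemma nested_or_disjoint_insert:
  assumes "\<And>X Y. X \<in> A \<Longrightarrow> Y \<in> A \<Longrightarrow> nested_or_disjoint X Y"
    and "\<And>Y. Y \<in> A \<Longrightarrow> nested_or_disjoint S Y"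
    and "X \<in> insert S A" "Y \<in> insert S A"
  shows "nested_or_disjoint X Y"
  using assms nested_or_disjoint_sym nested_or_disjoint_refl by blast

lemma nested_or_disjoint_Diff:
  "nested_or_disjoint S T \<Longrightarrow> nested_or_disjoint (S - A) (T - A)"
  unfolding nested_or_disjoint_def by blast

lemma wh_verticesI: "X \<subseteq> {2..n} \<Longrightarrow> 2 \<le> card X \<Longrightarrow> card X + 2 \<le> n \<Longrightarrow> X \<in> wh_vertices n"
  unfolding wh_vertices_def by blast

lemma whitehouseI:
  assumes "\<And>X. X \<in> F \<Longrightarrow> X \<in> wh_vertices n"
    and "\<And>X Y. X \<in> F \<Longrightarrow> Y \<in> F \<Longrightarrow> nested_or_disjoint X Y"
  shows "F \<in> whitehouse n"
  using assms unfolding whitehouse_def nested_or_disjoint_def by blast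

lemma whitehouse_vertex:
  assumes "F \<in> whitehouse n" "X \<in> F"
  shows "X \<subseteq> {2..n}" "2 \<le> card X" "card X + 2 \<le> n"
  using assms unfolding whitehouse_def wh_vertices_def by auto

lemma whitehouse_vertex_finite: "F \<in> whitehouse n \<Longrightarrow> X \<in> F \<Longrightarrow> finite X"
  by (meson finite_atLeastAtMost finite_subset whitehouse_vertex(1))

lemma whitehouse_nested:
  "F \<in> whitehouse n \<Longrightarrow> X \<in> F \<Longrightarrow> Y \<in> F \<Longrightarrow> nested_or_disjoint X Y"
  unfolding whitehouse_def nested_or_disjoint_def by blast

lemma whitehouse_vertex_apex_free: "F \<in> whitehouse n \<Longrightarrow> X \<in> F \<Longrightarrow> n+1 \<notin> X"
  using whitehouse_vertex(1) by fastforce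

lemma whitehouse_subset:
  assumes "F \<in> whitehouse n" "G \<subseteq> F"
  shows "G \<in> whitehouse n"
proof (rule whitehouseI)
  show "X \<in> wh_vertices n" if "X \<in> G" for X
    using assms that unfolding whitehouse_def by blast
  show "nested_or_disjoint X Y" if "X \<in> G" "Y \<in> G" for X Y
    using assms that whitehouse_nested by blast
qed

lemma whitehouse_Suc:
  assumes "F \<in> whitehouse n"
  shows "F \<in> whitehouse (n+1)"
proof (rule whitehouseI)
  show "X \<in> wh_vertices (n+1)" if "X \<in> F" for X
    using whitehouse_vertex[OF assms that] by (intro wh_verticesI) auto
qed (rule whitehouse_nested[OF assms])

lemma insert_top_whitehouse:
  assumes "3 \<le> n" "F \<in> whitehouse (n+1)" "\<And>X. X \<in> F \<Longrightarrow> X \<subseteq> {2..n}"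
  shows "insert {2..n} F \<in> whitehouse (n+1)"
proof (rule whitehouseI)
  show "X \<in> wh_vertices (n+1)" if "X \<in> insert {2..n} F" for X
  proof (cases "X = {2..n}")
    case True
    then show ?thesis
      using assms(1) by (intro wh_verticesI) auto
  next
    case False
    then have "X \<in> F"
      using that by blast
    then show ?thesis
      unfolding wh_vertices_def using whitehouse_vertex[OF assms(2)] by blast
  qed
  show "nested_or_disjoint X Y" if "X \<in> insert {2..n} F" "Y \<in> insert {2..n} F" for X Y
    using whitehouse_nested[OF assms(2)] _ that
  proof (rule nested_or_disjoint_insert)
    show "nested_or_disjoint {2..n} Y" if "Y \<in> F" for Y
      using assms(3)[OF that] unfolding nested_or_disjoint_def by blast
  qed
qed

definition whitehouse_above :: "nat \<Rightarrow> nat \<Rightarrow> nat set set set" where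
  "whitehouse_above n k = {F \<in> whitehouse (n+1). \<forall>U\<in>F. n+1 \<in> U \<longrightarrow> k < card U}"

lemma whitehouse_aboveI:
  "F \<in> whitehouse (n+1) \<Longrightarrow> (\<And>U. U \<in> F \<Longrightarrow> n+1 \<in> U \<Longrightarrow> k < card U) \<Longrightarrow> F \<in> whitehouse_above n k"
  unfolding whitehouse_above_def by blast

lemma whitehouse_aboveD:
  assumes "F \<in> whitehouse_above n k"
  shows "F \<in> whitehouse (n+1)" "\<And>U. U \<in> F \<Longrightarrow> n+1 \<in> U \<Longrightarrow> k < card U"
  using assms unfolding whitehouse_above_def by blast+

lemma whitehouse_above_antimono: "k \<le> j \<Longrightarrow> whitehouse_above n j \<subseteq> whitehouse_above n k"
  unfolding whitehouse_above_def by auto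

lemma whitehouse_above_face_subset:
  assumes "F \<in> whitehouse_above n k"
  shows "F \<subseteq> Pow {2..n+1}"
  using whitehouse_vertex(1)[OF whitehouse_aboveD(1)[OF assms]] by blast

lemma whitehouse_above_subset:
  assumes F: "F \<in> whitehouse_above n k" and "G \<subseteq> F"
  shows "G \<in> whitehouse_above n k"
proof (rule whitehouse_aboveI)
  show "G \<in> whitehouse (n+1)"
    by (rule whitehouse_subset[OF whitehouse_aboveD(1)[OF F] \<open>G \<subseteq> F\<close>])
  show "k < card U" if "U \<in> G" "n+1 \<in> U" for U
    using whitehouse_aboveD(2)[OF F] that \<open>G \<subseteq> F\<close> by blast
qed

lemma simplicial_complex_whitehouse_above: "simplicial_complex (whitehouse_above n k)"
  unfolding simplicial_complex_def
proof (intro ballI conjI allI impI)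
  fix F assume F: "F \<in> whitehouse_above n k"
  show "finite F"
    by (rule finite_subset[OF whitehouse_above_face_subset[OF F]]) simp
  show "G \<in> whitehouse_above n k" if "G \<subseteq> F" for G
    by (rule whitehouse_above_subset[OF F that])
qed

definition shrink :: "'a \<Rightarrow> nat \<Rightarrow> 'a set \<Rightarrow> 'a set" where
  "shrink a k U = (if a \<in> U \<and> card U = k then U - {a} else U)"

lemma nested_or_disjoint_delete_apex:
  assumes F: "F \<in> whitehouse_above n k" and X: "X \<in> F" "n+1 \<in> X" "card X = Suc k"
    and Y: "Y \<in> F"
  shows "nested_or_disjoint (X - {n+1}) Y"
proof (cases "Y \<subseteq> X \<and> n+1 \<in> Y")
  case True
  then have "card X \<le> card Y"
    using whitehouse_aboveD(2)[OF F Y] X(3) by simp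
  then have "Y = X"
    using card_seteq[OF whitehouse_vertex_finite[OF whitehouse_aboveD(1)[OF F] X(1)]] True by blast
  then show ?thesis
    unfolding nested_or_disjoint_def by blast
next
  case False
  then show ?thesis
    using whitehouse_nested[OF whitehouse_aboveD(1)[OF F] X(1) Y]
    unfolding nested_or_disjoint_def by blast
qed

lemma shrink_eq_Diff: "a \<in> X \<Longrightarrow> card X = k \<Longrightarrow> shrink a k X = X - {a}"
  unfolding shrink_def by simp

lemma shrink_eq_self: "\<not> (a \<in> X \<and> card X = k) \<Longrightarrow> shrink a k X = X"
  unfolding shrink_def by (rule if_not_P)

lemma shrink_keeps_apex:
  assumes "a \<in> shrink a k X"
  shows "shrink a k X = X" "card X \<noteq> k"
  using assms unfolding shrink_def by (auto split: if_splits)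

lemma nested_or_disjoint_shrink:
  assumes F: "F \<in> whitehouse_above n k" and X: "X \<in> F" and Y: "Y \<in> F"
  shows "nested_or_disjoint (shrink (n+1) (Suc k) X) Y"
proof (cases "n+1 \<in> X \<and> card X = Suc k")
  case True
  then show ?thesis
    using nested_or_disjoint_delete_apex[OF F X _ _ Y] by (simp add: shrink_eq_Diff)
next
  case False
  then show ?thesis
    using whitehouse_nested[OF whitehouse_aboveD(1)[OF F] X Y] by (simp add: shrink_eq_self)
qed

lemma nested_or_disjoint_shrink_shrink:
  assumes F: "F \<in> whitehouse_above n k" and X: "X \<in> F" and Y: "Y \<in> F"
  shows "nested_or_disjoint (shrink (n+1) (Suc k) X) (shrink (n+1) (Suc k) Y)"
proof (cases "n+1 \<in> Y \<and> card Y = Suc k")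
  case Y_shrinks: True
  have "nested_or_disjoint (shrink (n+1) (Suc k) X) (Y - {n+1})"
  proof (cases "n+1 \<in> X \<and> card X = Suc k")
    case True
    then show ?thesis
      using nested_or_disjoint_Diff[OF whitehouse_nested[OF whitehouse_aboveD(1)[OF F] X Y]]
      by (simp add: shrink_eq_Diff)
  next
    case False
    then show ?thesis
      using nested_or_disjoint_sym[OF nested_or_disjoint_shrink[OF F Y X]] Y_shrinks
      by (simp add: shrink_eq_self shrink_eq_Diff)
  qed
  then show ?thesis
    using Y_shrinks by (simp add: shrink_eq_Diff)
next
  case False
  then show ?thesis
    using nested_or_disjoint_shrink[OF F X Y] by (simp add: shrink_eq_self)
qed

lemma shrink_vertex:
  assumes k: "2 \<le> k" and F: "F \<in> whitehouse_above n k" and X: "X \<in> F"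
  shows "shrink (n+1) (Suc k) X \<in> wh_vertices (n+1)"
proof -
  have Fw: "F \<in> whitehouse (n+1)"
    by (rule whitehouse_aboveD(1)[OF F])
  show ?thesis
  proof (cases "n+1 \<in> X \<and> card X = Suc k")
    case True
    then have "card (X - {n+1}) = k"
      using whitehouse_vertex_finite[OF Fw X] by simp
    then show ?thesis
      using whitehouse_vertex[OF Fw X] True k by (simp add: shrink_eq_Diff wh_verticesI subset_iff)
  next
    case False
    then show ?thesis
      using whitehouse_vertex[OF Fw X] by (simp add: shrink_eq_self wh_verticesI)
  qed
qed

lemma shrink_union_in_whitehouse_above:
  assumes k: "2 \<le> k" and F: "F \<in> whitehouse_above n k"
  shows "F \<union> shrink (n+1) (Suc k) ` F \<in> whitehouse_above n k"
proof (rule whitehouse_aboveI[OF whitehouseI])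
  have Fw: "F \<in> whitehouse (n+1)"
    by (rule whitehouse_aboveD(1)[OF F])
  show "W \<in> wh_vertices (n+1)" if "W \<in> F \<union> shrink (n+1) (Suc k) ` F" for W
    using that shrink_vertex[OF k F] Fw unfolding whitehouse_def by blast
  show "nested_or_disjoint W Z"
    if "W \<in> F \<union> shrink (n+1) (Suc k) ` F" "Z \<in> F \<union> shrink (n+1) (Suc k) ` F" for W Z
    using that whitehouse_nested[OF Fw] nested_or_disjoint_shrink[OF F]
      nested_or_disjoint_sym[OF nested_or_disjoint_shrink[OF F]] nested_or_disjoint_shrink_shrink[OF F]
    by blast
  show "k < card W" if "W \<in> F \<union> shrink (n+1) (Suc k) ` F" "n+1 \<in> W" for W
    using that whitehouse_aboveD(2)[OF F] shrink_keeps_apex(1) by fastforce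
qed

lemma shrink_image_in_whitehouse_above:
  assumes k: "2 \<le> k" and F: "F \<in> whitehouse_above n k"
  shows "shrink (n+1) (Suc k) ` F \<in> whitehouse_above n (Suc k)"
proof (rule whitehouse_aboveI)
  show "shrink (n+1) (Suc k) ` F \<in> whitehouse (n+1)"
    using whitehouse_subset[OF whitehouse_aboveD(1)[OF shrink_union_in_whitehouse_above[OF k F]]]
    by blast
  show "Suc k < card W" if W: "W \<in> shrink (n+1) (Suc k) ` F" "n+1 \<in> W" for W
  proof -
    obtain X where X: "X \<in> F" "W = shrink (n+1) (Suc k) X"
      using W(1) by blast
    then have "W = X" "card X \<noteq> Suc k"
      using shrink_keeps_apex W(2) by simp_all
    then show ?thesis
      using whitehouse_aboveD(2)[OF F X(1)] W(2) by simp
  qed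
qed

lemma whitehouse_above_cone:
  assumes n: "3 \<le> n" and F: "F \<in> whitehouse_above n (n-1)"
  shows "insert {2..n} F \<in> whitehouse_above n (n-1)"
proof -
  have Fw: "F \<in> whitehouse (n+1)"
    by (rule whitehouse_aboveD(1)[OF F])
  have sub: "X \<subseteq> {2..n}" if X: "X \<in> F" for X
  proof -
    have "n+1 \<notin> X"
      using whitehouse_aboveD(2)[OF F X] whitehouse_vertex(3)[OF Fw X] by linarith
    moreover have "{2..n+1} - {n+1} = {2..n}"
      by auto
    ultimately show ?thesis
      using whitehouse_vertex(1)[OF Fw X] by blast
  qed
  show ?thesis
  proof (rule whitehouse_aboveI)
    show "insert {2..n} F \<in> whitehouse (n+1)"
      by (rule insert_top_whitehouse[OF n Fw sub])
    show "n - 1 < card U" if "U \<in> insert {2..n} F" "n+1 \<in> U" for U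
      using that whitehouse_aboveD(2)[OF F] by auto
  qed
qed

lemma contractible_whitehouse_above:
  assumes n: "3 \<le> n" and k: "2 \<le> k" "k \<le> n - 1"
  shows "contractible (geom_realization (whitehouse_above n k))"
proof -
  have V: "finite (Pow {2..n+1})"
    by simp
  show ?thesis
    using k(2)
  proof (induction k rule: inc_induct)
    case base
    show ?case
      by (rule contractible_geom_realization_cone[OF V whitehouse_above_face_subset[of _ n "n-1"]
            whitehouse_above_cone[OF n]])
  next
    case (step j)
    have j: "2 \<le> j"
      using step.hyps(1) k(1) by simp
    let ?r = "vertex_push (Pow {2..n+1}) (shrink (n+1) (Suc j))"
    have "homotopic_with_canon (\<lambda>x. True) (geom_realization (whitehouse_above n j))
            (geom_realization (whitehouse_above n j)) id ?r"
      by (rule homotopic_id_vertex_push[OF V whitehouse_above_face_subset[of _ n j]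
            shrink_union_in_whitehouse_above[OF j]])
    moreover have "?r ` geom_realization (whitehouse_above n j)
                     \<subseteq> geom_realization (whitehouse_above n (Suc j))"
      using vertex_push_in_geom_realization[OF V whitehouse_above_face_subset[of _ n j]
          shrink_image_in_whitehouse_above[OF j]] by blast
    moreover have "geom_realization (whitehouse_above n (Suc j))
                     \<subseteq> geom_realization (whitehouse_above n j)"
      by (rule geom_realization_mono[OF whitehouse_above_antimono]) simp
    ultimately show ?case
      by (rule contractible_if_deforms_into_contractible[OF _ continuous_on_vertex_push _ _ step.IH])
  qed
qed

definition insert_above :: "'a \<Rightarrow> 'a set \<Rightarrow> 'a set \<Rightarrow> 'a set" where
  "insert_above a S X = (if S \<subseteq> X then insert a X else X)"

lemma faceC_eq_insert_above_image: "faceC n F S = insert_above (n+1) S ` F"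
  unfolding faceC_def insert_above_def by auto

lemma faceD_eq_insert_above_image: "faceD n F S = insert S (insert_above (n+1) S ` F)"
  unfolding faceD_def faceC_eq_insert_above_image ..

lemma nested_or_disjoint_insert_above:
  assumes "nested_or_disjoint X Y" "S \<noteq> {}" "a \<notin> X" "a \<notin> Y"
  shows "nested_or_disjoint (insert_above a S X) (insert_above a S Y)"
  using assms unfolding nested_or_disjoint_def insert_above_def by auto

lemma nested_or_disjoint_base_insert_above:
  "nested_or_disjoint S Y \<Longrightarrow> nested_or_disjoint S (insert_above a S Y)"
  unfolding nested_or_disjoint_def insert_above_def by auto

lemma whitehouse_subset_whitehouse_above: "whitehouse n \<subseteq> whitehouse_above n k"
proof
  fix F assume F: "F \<in> whitehouse n"
  show "F \<in> whitehouse_above n k"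
  proof (rule whitehouse_aboveI[OF whitehouse_Suc[OF F]])
    show "k < card U" if "U \<in> F" "n+1 \<in> U" for U
      using whitehouse_vertex_apex_free[OF F that(1)] that(2) by blast
  qed
qed

lemma faceD_in_whitehouse_above:
  assumes F: "F \<in> whitehouse n" and S: "S \<in> F"
  shows "faceD n F S \<in> whitehouse_above n 2"
proof -
  note apex_free = whitehouse_vertex_apex_free[OF F]
  have S_nonempty: "S \<noteq> {}"
    using whitehouse_vertex(2)[OF F S] by auto
  have card_insert: "card (insert (n+1) X) = Suc (card X)" if X: "X \<in> F" for X
    using apex_free[OF X] whitehouse_vertex_finite[OF F X] by simp
  have lifted_vertex: "insert_above (n+1) S X \<in> wh_vertices (n+1)" if X: "X \<in> F" for X
    using whitehouse_vertex[OF F X] card_insert[OF X] unfolding insert_above_def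
    by (auto intro!: wh_verticesI)
  have lifted_card: "2 < card (insert_above (n+1) S X)"
    if X: "X \<in> F" "n+1 \<in> insert_above (n+1) S X" for X
    using whitehouse_vertex(2)[OF F X(1)] card_insert[OF X(1)] apex_free[OF X(1)] X(2)
    unfolding insert_above_def by (auto split: if_splits)
  have nested_lifted: "nested_or_disjoint (insert_above (n+1) S X) (insert_above (n+1) S Y)"
    if "X \<in> F" "Y \<in> F" for X Y
    by (rule nested_or_disjoint_insert_above[OF whitehouse_nested[OF F that] S_nonempty
          apex_free apex_free]) (use that in blast)+
  have nested_base: "nested_or_disjoint S (insert_above (n+1) S X)" if "X \<in> F" for X
    by (rule nested_or_disjoint_base_insert_above[OF whitehouse_nested[OF F S that]])
  have nested: "nested_or_disjoint W Z" if "W \<in> faceD n F S" "Z \<in> faceD n F S" for W Z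
    using _ _ that unfolding faceD_eq_insert_above_image
    by (rule nested_or_disjoint_insert) (use nested_lifted nested_base in blast)+
  show ?thesis
  proof (rule whitehouse_aboveI[OF whitehouseI[OF _ nested]])
    show "W \<in> wh_vertices (n+1)" if "W \<in> faceD n F S" for W
      using that lifted_vertex whitehouse_Suc[OF F] S
      unfolding faceD_eq_insert_above_image whitehouse_def by blast
    show "2 < card W" if "W \<in> faceD n F S" "n+1 \<in> W" for W
      using that lifted_card apex_free[OF S] unfolding faceD_eq_insert_above_image by blast
  qed
qed

lemma Qcomplex_subset_whitehouse_above:
  assumes n: "3 \<le> n"
  shows "Qcomplex n \<subseteq> whitehouse_above n 2"
proof
  fix G assume "G \<in> Qcomplex n"
  then consider (A) F where "F \<in> whitehouse n" "G = faceA F"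
    | (B) F where "F \<in> whitehouse n" "G = faceB n F"
    | (C) F S where "F \<in> whitehouse n" "S \<in> F" "G = faceC n F S"
    | (D) F S where "F \<in> whitehouse n" "S \<in> F" "G = faceD n F S"
    unfolding Qcomplex_def by blast
  then show "G \<in> whitehouse_above n 2"
  proof cases
    case (A F)
    then show ?thesis
      using whitehouse_subset_whitehouse_above unfolding faceA_def by blast
  next
    case (B F)
    have "faceB n F \<in> whitehouse_above n 2"
    proof (rule whitehouse_aboveI)
      show "faceB n F \<in> whitehouse (n+1)"
        unfolding faceB_def
        by (rule insert_top_whitehouse[OF n whitehouse_Suc[OF B(1)] whitehouse_vertex(1)[OF B(1)]])
      show "2 < card U" if "U \<in> faceB n F" "n+1 \<in> U" for U
        using that whitehouse_vertex_apex_free[OF B(1)] unfolding faceB_def by auto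
    qed
    then show ?thesis
      using B(2) by simp
  next
    case (C F S)
    have "faceC n F S \<subseteq> faceD n F S"
      unfolding faceD_def by blast
    then show ?thesis
      using whitehouse_above_subset[OF faceD_in_whitehouse_above[OF C(1,2)]] C(3) by simp
  next
    case (D F S)
    then show ?thesis
      using faceD_in_whitehouse_above by blast
  qed
qed

lemma faceA_in_Qcomplex: "F \<in> whitehouse n \<Longrightarrow> faceA F \<in> Qcomplex n"
  unfolding Qcomplex_def by blast

lemma faceB_in_Qcomplex: "F \<in> whitehouse n \<Longrightarrow> faceB n F \<in> Qcomplex n"
  unfolding Qcomplex_def by blast

lemma faceC_in_Qcomplex: "F \<in> whitehouse n \<Longrightarrow> S \<in> F \<Longrightarrow> faceC n F S \<in> Qcomplex n"
  unfolding Qcomplex_def by blast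

lemma faceD_in_Qcomplex: "F \<in> whitehouse n \<Longrightarrow> S \<in> F \<Longrightarrow> faceD n F S \<in> Qcomplex n"
  unfolding Qcomplex_def by blast

lemma apex_free_in_Qcomplex:
  assumes G: "G \<in> whitehouse (n+1)" and apex_free: "\<And>X. X \<in> G \<Longrightarrow> n+1 \<notin> X"
  shows "G \<in> Qcomplex n"
proof -
  have sub: "X \<subseteq> {2..n}" if X: "X \<in> G" for X
  proof -
    have "{2..n+1} - {n+1} = {2..n}"
      by auto
    then show ?thesis
      using whitehouse_vertex(1)[OF G X] apex_free[OF X] by blast
  qed
  have "G - {{2..n}} \<in> whitehouse n"
  proof (rule whitehouseI)
    fix X assume "X \<in> G - {{2..n}}"
    then have X: "X \<in> G" "X \<noteq> {2..n}"
      by simp_all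
    then have "card X < card {2..n}"
      using sub[OF X(1)] by (intro psubset_card_mono) auto
    then show "X \<in> wh_vertices n"
      using sub[OF X(1)] whitehouse_vertex(2)[OF G X(1)] by (intro wh_verticesI) simp_all
  next
    show "nested_or_disjoint X Y" if "X \<in> G - {{2..n}}" "Y \<in> G - {{2..n}}" for X Y
      using whitehouse_nested[OF G] that by simp
  qed
  then have "faceA (G - {{2..n}}) \<in> Qcomplex n" "faceB n (G - {{2..n}}) \<in> Qcomplex n"
    by (rule faceA_in_Qcomplex, rule faceB_in_Qcomplex)
  then show ?thesis
    unfolding faceA_def faceB_def by (cases "{2..n} \<in> G") (simp_all add: insert_absorb)
qed

text \<open>A face G of K_2 with a vertex through n+1 is recovered as C(F,S) or D(F,S) from
  F = {X - {n+1} | X \<in> G} and S = U - {n+1}, where U is a smallest vertex through n+1.\<close>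
context
  fixes n :: nat and G :: "nat set set" and U :: "nat set"
  assumes G: "G \<in> whitehouse_above n 2"
    and U: "U \<in> G" "n+1 \<in> U"
    and U_min: "\<And>V. V \<in> G \<Longrightarrow> n+1 \<in> V \<Longrightarrow> card U \<le> card V"
begin

lemma min_apex_vertex_subset:
  assumes V: "V \<in> G" "n+1 \<in> V"
  shows "U \<subseteq> V"
proof -
  have Gw: "G \<in> whitehouse (n+1)"
    by (rule whitehouse_aboveD(1)[OF G])
  have "V \<subseteq> U \<Longrightarrow> V = U"
    using card_seteq[OF whitehouse_vertex_finite[OF Gw U(1)]] U_min[OF V] by blast
  then show ?thesis
    using whitehouse_nested[OF Gw U(1) V(1)] U(2) V(2) unfolding nested_or_disjoint_def by blast
qed

lemma min_apex_base_nonempty: "U - {n+1} \<noteq> {}"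
proof
  assume "U - {n+1} = {}"
  then have "card U \<le> card {n+1}"
    by (intro card_mono) auto
  then show False
    using whitehouse_aboveD(2)[OF G U] by simp
qed

lemma min_apex_base_unique:
  assumes X: "X \<in> G" "n+1 \<notin> X" "U - {n+1} \<subseteq> X"
  shows "X = U - {n+1}"
  using whitehouse_nested[OF whitehouse_aboveD(1)[OF G] X(1) U(1)] X(2,3) U(2)
    min_apex_base_nonempty unfolding nested_or_disjoint_def by blast

lemma card_apex_free_vertex:
  assumes X: "X \<in> G" "n+1 \<notin> X"
  shows "card X + 2 \<le> n"
proof -
  have Gw: "G \<in> whitehouse (n+1)"
    by (rule whitehouse_aboveD(1)[OF G])
  have U_bounds: "2 < card U" "card U + 2 \<le> n+1"
    using whitehouse_aboveD(2)[OF G U] whitehouse_vertex(3)[OF Gw U(1)] by simp_all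
  have card_base: "card (U - {n+1}) = card U - 1"
    using U(2) whitehouse_vertex_finite[OF Gw U(1)] by simp
  have "{2..n+1} - {n+1} = {2..n}"
    by auto
  then have X_sub: "X \<subseteq> {2..n}" and base_sub: "U - {n+1} \<subseteq> {2..n}"
    using whitehouse_vertex(1)[OF Gw X(1)] whitehouse_vertex(1)[OF Gw U(1)] X(2) by blast+
  consider "X \<subseteq> U - {n+1}" | "X \<subseteq> {2..n} - (U - {n+1})"
    using whitehouse_nested[OF Gw X(1) U(1)] X(2) U(2) X_sub unfolding nested_or_disjoint_def by blast
  then show ?thesis
  proof cases
    case 1
    then have "card X \<le> card (U - {n+1})"
      by (rule card_mono[rotated]) (simp add: whitehouse_vertex_finite[OF Gw U(1)])
    then show ?thesis
      using card_base U_bounds by linarith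
  next
    case 2
    then have "card X \<le> card ({2..n} - (U - {n+1}))"
      by (rule card_mono[rotated]) simp
    also have "\<dots> = (n - 1) - (card U - 1)"
      using card_Diff_subset[OF finite_subset[OF base_sub] base_sub] card_base by simp
    finally show ?thesis
      using U_bounds by linarith
  qed
qed

lemma delete_apex_in_whitehouse: "(\<lambda>X. X - {n+1}) ` G \<in> whitehouse n"
proof (rule whitehouseI)
  have Gw: "G \<in> whitehouse (n+1)"
    by (rule whitehouse_aboveD(1)[OF G])
  show "W \<in> wh_vertices n" if W: "W \<in> (\<lambda>X. X - {n+1}) ` G" for W
  proof -
    obtain X where X: "X \<in> G" "W = X - {n+1}"
      using W by blast
    have "{2..n+1} - {n+1} = {2..n}"
      by auto
    then have W_sub: "W \<subseteq> {2..n}"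
      using whitehouse_vertex(1)[OF Gw X(1)] X(2) by blast
    show ?thesis
    proof (cases "n+1 \<in> X")
      case True
      then have "card W = card X - 1"
        using X(2) whitehouse_vertex_finite[OF Gw X(1)] by simp
      then show ?thesis
        using W_sub whitehouse_aboveD(2)[OF G X(1) True] whitehouse_vertex(3)[OF Gw X(1)]
        by (intro wh_verticesI) simp_all
    next
      case False
      then have "W = X"
        using X(2) by simp
      then show ?thesis
        using W_sub whitehouse_vertex(2)[OF Gw X(1)] card_apex_free_vertex[OF X(1) False]
        by (intro wh_verticesI) simp_all
    qed
  qed
  show "nested_or_disjoint W Z"
    if "W \<in> (\<lambda>X. X - {n+1}) ` G" "Z \<in> (\<lambda>X. X - {n+1}) ` G" for W Z
    using that nested_or_disjoint_Diff[OF whitehouse_nested[OF Gw]] by blast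
qed

lemma insert_above_delete_apex:
  assumes X: "X \<in> G"
  shows "insert_above (n+1) (U - {n+1}) (X - {n+1}) = (if X = U - {n+1} then U else X)"
proof (cases "n+1 \<in> X")
  case True
  then show ?thesis
    using min_apex_vertex_subset[OF X True] unfolding insert_above_def by auto
next
  case False
  then show ?thesis
    using min_apex_base_unique[OF X False] U(2) unfolding insert_above_def by auto
qed

lemma insert_above_image_delete_apex:
  "insert_above (n+1) (U - {n+1}) ` (\<lambda>X. X - {n+1}) ` G = G - {U - {n+1}}"
proof -
  have "insert_above (n+1) (U - {n+1}) ` (\<lambda>X. X - {n+1}) ` G
          = (\<lambda>X. if X = U - {n+1} then U else X) ` G"
    unfolding image_image using insert_above_delete_apex by (rule image_cong[OF refl])
  also have "\<dots> = G - {U - {n+1}}"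
    using U by (auto split: if_splits)
  finally show ?thesis .
qed

lemma min_apex_in_Qcomplex: "G \<in> Qcomplex n"
proof -
  let ?F = "(\<lambda>X. X - {n+1}) ` G" and ?S = "U - {n+1}"
  have F: "?F \<in> whitehouse n" and S: "?S \<in> ?F"
    using delete_apex_in_whitehouse U(1) by blast+
  have "faceC n ?F ?S = G - {?S}" "faceD n ?F ?S = insert ?S (G - {?S})"
    unfolding faceD_eq_insert_above_image faceC_eq_insert_above_image
      insert_above_image_delete_apex by simp_all
  then show ?thesis
    using faceC_in_Qcomplex[OF F S] faceD_in_Qcomplex[OF F S]
    by (cases "?S \<in> G") (simp_all add: insert_absorb)
qed

end

lemma Qcomplex_eq_whitehouse_above:
  assumes "3 \<le> n"
  shows "Qcomplex n = whitehouse_above n 2"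
proof
  show "Qcomplex n \<subseteq> whitehouse_above n 2"
    by (rule Qcomplex_subset_whitehouse_above[OF assms])
  show "whitehouse_above n 2 \<subseteq> Qcomplex n"
  proof
    fix G assume G: "G \<in> whitehouse_above n 2"
    show "G \<in> Qcomplex n"
    proof (cases "\<exists>V\<in>G. n+1 \<in> V")
      case True
      then obtain U where "U \<in> G \<and> n+1 \<in> U" "\<And>V. V \<in> G \<and> n+1 \<in> V \<Longrightarrow> card U \<le> card V"
        using ex_has_least_nat[of "\<lambda>V. V \<in> G \<and> n+1 \<in> V" _ card] by blast
      then show ?thesis
        using min_apex_in_Qcomplex[OF G] by blast
    next
      case False
      then show ?thesis
        using apex_free_in_Qcomplex[OF whitehouse_aboveD(1)[OF G]] by blast
    qed
  qed
qed

theorem mainTheorem11: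
  fixes n :: nat
  assumes "n \<ge> 3"
  shows "subcomplex (Qcomplex n) (whitehouse (n+1))
         \<and> geom_realization (Qcomplex n) \<noteq> {}
         \<and> contractible (geom_realization (Qcomplex n))"
proof -
  have Q: "Qcomplex n = whitehouse_above n 2"
    using Qcomplex_eq_whitehouse_above assms by simp
  have "{} \<in> whitehouse n"
    by (rule whitehouseI) simp_all
  then have "faceB n {} \<in> Qcomplex n"
    by (rule faceB_in_Qcomplex)
  then have "indicator {{2..n}} \<in> geom_realization (Qcomplex n)"
    unfolding faceB_def by (rule indicator_in_geom_realization)
  then have "geom_realization (Qcomplex n) \<noteq> {}"
    by blast
  moreover have "subcomplex (Qcomplex n) (whitehouse (n+1))"
    unfolding subcomplex_def Q
    using simplicial_complex_whitehouse_above whitehouse_aboveD(1)[of _ n 2] by blast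
  moreover have "contractible (geom_realization (Qcomplex n))"
    unfolding Q by (rule contractible_whitehouse_above) (use assms in simp_all)
  ultimately show ?thesis
    by blast
qed

end
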